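(* Let $\mathcal{C}$ be an $[n,k,d]_q$ linear code with two $(r_i,\delta_i)_{i\in\{1,2\}}$ localities with respect to the sets $\mathcal{T}_1$, $\mathcal{T}_2=[n]\setminus\mathcal{T}_1$, where $n_i=|\mathcal{T}_i|$, $r_1\le r_2$ and $\delta_1\ge\delta_2\ge 2$. Put $\Delta=\lceil n_1/(r_1+\delta_1-1)\rceil(\delta_1-1)$. Suppose that $r_1\lceil n_1/(r_1+\delta_1-1)\rceil\le k-1$ and $r_1\lceil(\Delta-1)/(\delta_1-1)\rceil+(\Delta-1)<n_1$. Then $$\Phi(x)\le r_1\left\lceil\frac{x}{\delta_1-1}\right\rceil+x \quad\text{for } 0\le x\le\Delta,$$ and $$\Phi(x)\le r_1\left\lceil\frac{n_1}{r_1+\delta_1-1}\right\rceil+r_2\left\lceil\frac{x-\Delta}{\delta_2-1}\right\rceil+x\quad\text{for } \Delta\le x\le\rho+1,$$ where $\rho=\max\{x:\Phi(x)-x<k\}$.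
   Context: $[n]=\{1,\dots,n\}$. For an $[n,k,d]_q$ linear code $\mathcal{C}$ with generator matrix $G$ whose columns are $\vec g_1,\dots,\vec g_n$, a regenerating set of coordinate $i$ is a subset $R\subseteq[n]$ with $i\in R$ such that $\vec g_i$ is an $\mathbb{F}_q$-linear combination of $\{\vec g_j\}_{j\in R\setminus\{i\}}$; regenerating sets are always taken to be minimal (no proper subset $R'\subsetneq R\setminus\{i\}$ has $\vec g_i$ in the span of $\{\vec g_j\}_{j\in R'}$). $\mathcal{R}_i$ denotes the collection of all regenerating sets of coordinate $i$. A sequence $R_1,\dots,R_m$ with $R_t\in\mathcal{R}_{l_t}$, $l_t\in[n]$, has a nontrivial union if $l_j\notin\bigcup_{t=1}^{j-1}R_t$ for all $1\le j\le m$. Define $\Phi(0)=0$ and, for $x\ge1$, $\Phi(x)=\min\{|\bigcup_{t=1}^xR_t| : R_t\in\mathcal{R}_{l_t},\ R_1,\dots,R_x\text{ have a nontrivial union}\}$. Two $(r_i,\delta_i)_{i\in\{1,2\}}$ localities: $\mathcal{T}_1\subseteq[n]$, $\mathcal{T}_2=[n]\setminus\mathcal{T}_1$, $r_1\le r_2$, $\delta_1\ge\delta_2\ge2$ integers, and for $i=1,2$ and each $\iota\in\mathcal{T}_i$ there is $S_\iota\subseteq\mathcal{T}_i$ with $\iota\in S_\iota$, $\delta_i\le|S_\iota|\le r_i+\delta_i-1$, such that for every $E\subseteq S_\iota$ with $|E|=\delta_i-1$ and every $j\in E$, $(S_\iota\setminus E)\cup\{j\}\in\mathcal{R}_j$.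 *)

theory Defs
  imports Complex_Main
begin

text \<open>A linear code of length n and dimension k over a finite field 'a is given by a
 generator matrix G (k x n); its columns are g j (for j in {1..n}), with entries g j r, r < k.\<close>

definition in_span :: "(nat \<Rightarrow> nat \<Rightarrow> 'a::field) \<Rightarrow> nat \<Rightarrow> nat \<Rightarrow> nat set \<Rightarrow> bool" where
  "in_span g k i S \<longleftrightarrow> (\<exists>c. \<forall>r<k. g i r = (\<Sum>j\<in>S. c j * g j r))"

definition codeword :: "(nat \<Rightarrow> nat \<Rightarrow> 'a::field) \<Rightarrow> nat \<Rightarrow> (nat \<Rightarrow> 'a) \<Rightarrow> nat \<Rightarrow> 'a" where
  "codeword g k m j = (\<Sum>r<k. m r * g j r)"

definition full_row_rank :: "(nat \<Rightarrow> nat \<Rightarrow> 'a::field) \<Rightarrow> nat \<Rightarrow> nat \<Rightarrow> bool" where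
  "full_row_rank g n k \<longleftrightarrow>
     (\<forall>m. (\<forall>j\<in>{1..n}. codeword g k m j = 0) \<longrightarrow> (\<forall>r<k. m r = 0))"

definition weight :: "nat \<Rightarrow> (nat \<Rightarrow> 'a::zero) \<Rightarrow> nat" where
  "weight n c = card {j\<in>{1..n}. c j \<noteq> 0}"

definition min_dist :: "(nat \<Rightarrow> nat \<Rightarrow> 'a::field) \<Rightarrow> nat \<Rightarrow> nat \<Rightarrow> nat" where
  "min_dist g n k = Min {weight n (codeword g k m) | m. \<exists>j\<in>{1..n}. codeword g k m j \<noteq> 0}"

text \<open>[n,k,d]_q linear code with generator matrix g over the finite field 'a (q = CARD('a)).\<close>
definition is_code :: "(nat \<Rightarrow> nat \<Rightarrow> 'a::{field,finite}) \<Rightarrow> nat \<Rightarrow> nat \<Rightarrow> nat \<Rightarrow> bool" where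
  "is_code g n k d \<longleftrightarrow> full_row_rank g n k \<and> d = min_dist g n k"

definition regen :: "(nat \<Rightarrow> nat \<Rightarrow> 'a::field) \<Rightarrow> nat \<Rightarrow> nat \<Rightarrow> nat \<Rightarrow> nat set \<Rightarrow> bool" where
  "regen g n k i R \<longleftrightarrow> R \<subseteq> {1..n} \<and> i \<in> R \<and> in_span g k i (R - {i}) \<and>
     (\<forall>R'. R' \<subset> R - {i} \<longrightarrow> \<not> in_span g k i R')"

definition nontrivial_union :: "nat \<Rightarrow> (nat \<Rightarrow> nat set) \<Rightarrow> (nat \<Rightarrow> nat) \<Rightarrow> bool" where
  "nontrivial_union m R l \<longleftrightarrow> (\<forall>j\<in>{1..m}. l j \<notin> (\<Union>t\<in>{1..<j}. R t))"

definition Phi_set :: "(nat \<Rightarrow> nat \<Rightarrow> 'a::field) \<Rightarrow> nat \<Rightarrow> nat \<Rightarrow> nat \<Rightarrow> nat set" where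
  "Phi_set g n k x = {card (\<Union>t\<in>{1..x}. R t) | R l.
      (\<forall>t\<in>{1..x}. l t \<in> {1..n} \<and> regen g n k (l t) (R t)) \<and> nontrivial_union x R l}"

definition Phi :: "(nat \<Rightarrow> nat \<Rightarrow> 'a::field) \<Rightarrow> nat \<Rightarrow> nat \<Rightarrow> nat \<Rightarrow> nat" where
  "Phi g n k x = (if x = 0 then 0 else Min (Phi_set g n k x))"

text \<open>rho = max {x : Phi(x) - x < k}, over those x for which Phi(x) is defined.\<close>
definition rho :: "(nat \<Rightarrow> nat \<Rightarrow> 'a::field) \<Rightarrow> nat \<Rightarrow> nat \<Rightarrow> nat" where
  "rho g n k = Max {x. Phi_set g n k x \<noteq> {} \<and> int (Phi g n k x) - int x < int k}"

definition locality :: "(nat \<Rightarrow> nat \<Rightarrow> 'a::field) \<Rightarrow> nat \<Rightarrow> nat \<Rightarrow> nat set \<Rightarrow> nat \<Rightarrow> nat \<Rightarrow> bool" where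
  "locality g n k T r \<delta> \<longleftrightarrow> (\<forall>\<iota>\<in>T. \<exists>S. S \<subseteq> T \<and> \<iota> \<in> S \<and> \<delta> \<le> card S \<and> card S \<le> r + \<delta> - 1 \<and>
      (\<forall>E. E \<subseteq> S \<and> card E = \<delta> - 1 \<longrightarrow> (\<forall>j\<in>E. regen g n k j ((S - E) \<union> {j}))))"

definition two_localities :: "(nat \<Rightarrow> nat \<Rightarrow> 'a::field) \<Rightarrow> nat \<Rightarrow> nat \<Rightarrow> nat set \<Rightarrow> nat set \<Rightarrow>
    nat \<Rightarrow> nat \<Rightarrow> nat \<Rightarrow> nat \<Rightarrow> bool" where
  "two_localities g n k T1 T2 r1 r2 \<delta>1 \<delta>2 \<longleftrightarrow>
     T1 \<subseteq> {1..n} \<and> T2 = {1..n} - T1 \<and> r1 \<le> r2 \<and> \<delta>1 \<ge> \<delta>2 \<and> \<delta>2 \<ge> 2 \<and>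
     locality g n k T1 r1 \<delta>1 \<and> locality g n k T2 r2 \<delta>2"

end

theory Submission
  imports Defs
begin

text \<open>Upper bounds on \<open>\<Phi>\<close> come from explicit nontrivial-union sequences built greedily from
  repair groups. Erasing \<open>\<delta> - 1\<close> positions of a group \<open>S\<close> with \<open>|S| \<le> r + \<delta> - 1\<close>, each erased
  position is regenerated from the rest of \<open>S\<close>, so \<open>\<delta> - 1\<close> steps enlarge the union by at most
  \<open>r + \<delta> - 1\<close>; positions already covered make a step only cheaper. Running the greedy inside
  \<open>T\<^sub>1\<close> for \<open>\<Delta>\<close> steps gives the first bound, and continuing on all of \<open>[n]\<close>, where every group
  is an \<open>(r\<^sub>2, \<ge> \<delta>\<^sub>2)\<close> group because \<open>r\<^sub>1 \<le> r\<^sub>2\<close> and \<open>\<delta>\<^sub>1 \<ge> \<delta>\<^sub>2\<close>, gives the second. The greedy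
  only stalls once it has covered everything available: inside \<open>T\<^sub>1\<close> this is ruled out by the
  hypothesis on \<open>n\<^sub>1\<close>, and on \<open>[n]\<close> below \<open>\<rho> + 1\<close> by the rank bound \<open>x + k \<le> n\<close> for sequences of
  length \<open>x\<close>.\<close>

definition regen_seq ::
    "(nat \<Rightarrow> nat \<Rightarrow> 'a::field) \<Rightarrow> nat \<Rightarrow> nat \<Rightarrow> nat \<Rightarrow> (nat \<Rightarrow> nat set) \<Rightarrow> (nat \<Rightarrow> nat) \<Rightarrow> bool"
  where "regen_seq g n k x R l \<longleftrightarrow>
    (\<forall>t\<in>{1..x}. l t \<in> {1..n} \<and> regen g n k (l t) (R t)) \<and> nontrivial_union x R l"

definition seq_union :: "nat \<Rightarrow> (nat \<Rightarrow> nat set) \<Rightarrow> nat set" where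
  "seq_union x R = (\<Union>t\<in>{1..x}. R t)"

lemma Phi_set_eq: "Phi_set g n k x = {card (seq_union x R) | R l. regen_seq g n k x R l}"
  unfolding Phi_set_def regen_seq_def seq_union_def by simp

lemma regen_subset: "regen g n k i R \<Longrightarrow> R \<subseteq> {1..n}"
  and regen_mem: "regen g n k i R \<Longrightarrow> i \<in> R"
  by (simp_all add: regen_def)

lemma regen_seq_regen: "regen_seq g n k x R l \<Longrightarrow> t \<in> {1..x} \<Longrightarrow> regen g n k (l t) (R t)"
  by (simp add: regen_seq_def)

lemma regen_seq_fresh:
  "regen_seq g n k x R l \<Longrightarrow> 1 \<le> s \<Longrightarrow> s < t \<Longrightarrow> t \<le> x \<Longrightarrow> l t \<notin> R s"
  unfolding regen_seq_def nontrivial_union_def by fastforce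

lemma seq_union_subset: "regen_seq g n k x R l \<Longrightarrow> seq_union x R \<subseteq> {1..n}"
  unfolding seq_union_def by (blast dest: regen_seq_regen regen_subset)

lemma finite_seq_union: "regen_seq g n k x R l \<Longrightarrow> finite (seq_union x R)"
  using finite_subset[OF seq_union_subset] by blast

lemma regen_seq_prefix: "regen_seq g n k x R l \<Longrightarrow> y \<le> x \<Longrightarrow> regen_seq g n k y R l"
  unfolding regen_seq_def nontrivial_union_def by auto

lemma regen_seq_0: "regen_seq g n k 0 R l"
  by (simp add: regen_seq_def nontrivial_union_def)

lemma seq_union_0 [simp]: "seq_union 0 R = {}"
  by (simp add: seq_union_def)

lemma seq_union_Suc: "seq_union (Suc x) R = seq_union x R \<union> R (Suc x)"
  unfolding seq_union_def by (auto simp: atLeastAtMostSuc_conv)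

lemma card_seq_union_Suc:
  assumes v: "regen_seq g n k (Suc x) R l"
  shows "card (seq_union x R) < card (seq_union (Suc x) R)"
proof -
  have "l (Suc x) \<in> R (Suc x)"
    using regen_mem[OF regen_seq_regen[OF v]] by simp
  moreover have "l (Suc x) \<notin> seq_union x R"
    using regen_seq_fresh[OF v] unfolding seq_union_def by auto
  ultimately have "seq_union x R \<subset> seq_union (Suc x) R"
    by (auto simp: seq_union_Suc)
  then show ?thesis
    using finite_seq_union[OF v] by (rule psubset_card_mono[rotated])
qed

lemma card_seq_union_mono:
  "regen_seq g n k x R l \<Longrightarrow> y \<le> x \<Longrightarrow> card (seq_union y R) + (x - y) \<le> card (seq_union x R)"
proof (induction x)
  case (Suc x)
  show ?case
  proof (cases "y = Suc x")
    case False
    then have "card (seq_union y R) + (x - y) \<le> card (seq_union x R)"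
      using Suc regen_seq_prefix[of g n k "Suc x" R l x] by simp
    then show ?thesis
      using card_seq_union_Suc[OF Suc.prems(1)] False Suc.prems(2) by simp
  qed simp
qed simp

lemma regen_seq_snoc:
  assumes v: "regen_seq g n k x R l" and c: "c \<notin> seq_union x R" and S: "regen g n k c S"
  shows "regen_seq g n k (Suc x) (R(Suc x := S)) (l(Suc x := c))"
    and "seq_union (Suc x) (R(Suc x := S)) = seq_union x R \<union> S"
proof -
  have old: "(\<Union>t\<in>{1..<j}. (R(Suc x := S)) t) = (\<Union>t\<in>{1..<j}. R t)" if "j \<le> Suc x" for j
    using that by auto
  have last: "(\<Union>t\<in>{1..<Suc x}. R t) = seq_union x R"
    by (simp add: seq_union_def atLeastLessThanSuc_atLeastAtMost)
  show "regen_seq g n k (Suc x) (R(Suc x := S)) (l(Suc x := c))"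
    using v c S regen_subset[OF S] regen_mem[OF S]
    unfolding regen_seq_def nontrivial_union_def
    by (auto simp: old last atLeastAtMostSuc_conv seq_union_def)
  have "seq_union x (R(Suc x := S)) = seq_union x R"
    by (simp add: seq_union_def)
  then show "seq_union (Suc x) (R(Suc x := S)) = seq_union x R \<union> S"
    by (simp add: seq_union_Suc)
qed

lemma regen_seq_append:
  assumes v: "regen_seq g n k x R l" and "finite C"
    and "\<forall>c\<in>C. regen g n k c (F c)" and "C \<inter> seq_union x R = {}"
    and "\<forall>c\<in>C. \<forall>c'\<in>C. c \<noteq> c' \<longrightarrow> c \<notin> F c'"
  shows "\<exists>R' l'. regen_seq g n k (x + card C) R' l' \<and>
    seq_union (x + card C) R' = seq_union x R \<union> (\<Union>c\<in>C. F c)"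
  using assms(2-)
proof (induction C rule: finite_induct)
  case empty
  then show ?case using v by auto
next
  case (insert c C)
  then obtain R' l' where R': "regen_seq g n k (x + card C) R' l'"
    and U': "seq_union (x + card C) R' = seq_union x R \<union> (\<Union>c\<in>C. F c)"
    by auto
  have c: "c \<notin> seq_union (x + card C) R'"
    using insert.prems insert.hyps(2) by (auto simp: U')
  have "regen g n k c (F c)" using insert.prems by blast
  note ext = regen_seq_snoc[OF R' c this]
  have "x + card (insert c C) = Suc (x + card C)" using insert.hyps by simp
  moreover have "seq_union x R \<union> (\<Union>c\<in>insert c C. F c) = seq_union (x + card C) R' \<union> F c"
    using U' by auto
  ultimately show ?case
    using ext by (intro exI[of _ "R'(Suc (x + card C) := F c)"] exI[of _ "l'(Suc (x + card C) := c)"])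
      (simp only:)
qed

lemma finite_Phi_set: "finite (Phi_set g n k x)"
proof (rule finite_subset)
  show "Phi_set g n k x \<subseteq> {..n}"
    using card_mono[OF _ seq_union_subset] by (fastforce simp: Phi_set_eq)
qed simp

lemma Phi_set_not_empty: "regen_seq g n k x R l \<Longrightarrow> Phi_set g n k x \<noteq> {}"
  by (auto simp: Phi_set_eq)

lemma Phi_le:
  assumes "regen_seq g n k x R l"
  shows "Phi g n k x \<le> card (seq_union x R)"
proof -
  have "card (seq_union x R) \<in> Phi_set g n k x"
    using assms by (auto simp: Phi_set_eq)
  then show ?thesis
    by (simp add: Phi_def Min_le[OF finite_Phi_set])
qed

lemma Phi_attained:
  assumes "Phi_set g n k x \<noteq> {}"
  obtains R l where "regen_seq g n k x R l" "card (seq_union x R) = Phi g n k x"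
proof (cases "x = 0")
  case True
  then show ?thesis
    by (intro that[of "\<lambda>_. {}" "\<lambda>_. 0"]) (simp_all add: regen_seq_0 Phi_def)
next
  case False
  have "Min (Phi_set g n k x) \<in> Phi_set g n k x"
    using Min_in[OF finite_Phi_set assms] .
  then show ?thesis using that False by (auto simp: Phi_def Phi_set_eq)
qed

text \<open>Gaussian elimination: the equation of \<open>v0\<close> is solved for a pivot unknown \<open>p\<close>, which is
  then eliminated from the remaining equations.\<close>
lemma homogeneous_system_nontrivial_solution:
  fixes e :: "'b \<Rightarrow> 'c \<Rightarrow> 'a::field"
  assumes "finite V" and "finite K" and "card V < card K"
  shows "\<exists>m. (\<exists>r\<in>K. m r \<noteq> 0) \<and> (\<forall>v\<in>V. (\<Sum>r\<in>K. m r * e v r) = 0)"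
  using assms
proof (induction V arbitrary: K e rule: finite_induct)
  case empty
  then obtain r0 where "r0 \<in> K" by fastforce
  then show ?case by (intro exI[of _ "\<lambda>r. if r = r0 then 1 else 0"]) auto
next
  case (insert v0 V)
  show ?case
  proof (cases "\<forall>r\<in>K. e v0 r = 0")
    case True
    then show ?thesis
      using insert.IH[of K e] insert.prems insert.hyps by auto
  next
    case False
    then obtain p where p: "p \<in> K" "e v0 p \<noteq> 0" by auto
    define K' where "K' = K - {p}"
    define e' where "e' = (\<lambda>v r. e v r - e v p * e v0 r / e v0 p)"
    have "finite K'" "card V < card K'"
      using insert.prems insert.hyps p by (auto simp: K'_def)
    then obtain m' where m': "\<exists>r\<in>K'. m' r \<noteq> 0" "\<forall>v\<in>V. (\<Sum>r\<in>K'. m' r * e' v r) = 0"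
      using insert.IH[of K' e'] by blast
    define S where "S = (\<Sum>r\<in>K'. m' r * e v0 r)"
    define m where "m = m'(p := - S / e v0 p)"
    have split: "(\<Sum>r\<in>K. m r * f r) = - S / e v0 p * f p + (\<Sum>r\<in>K'. m' r * f r)" for f
    proof -
      have "(\<Sum>r\<in>K'. m r * f r) = (\<Sum>r\<in>K'. m' r * f r)"
        by (rule sum.cong) (auto simp: m_def K'_def)
      then show ?thesis
        using p insert.prems by (simp add: sum.remove m_def K'_def)
    qed
    have "(\<Sum>r\<in>K. m r * e v r) = 0" if "v \<in> V" for v
    proof -
      have "0 = (\<Sum>r\<in>K'. m' r * e' v r)" using m' that by auto
      also have "\<dots> = (\<Sum>r\<in>K'. m' r * e v r) - e v p / e v0 p * S"
        unfolding e'_def S_def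
        by (simp add: right_diff_distrib sum_subtractf sum_distrib_left mult_ac)
      finally show ?thesis using split[of "e v"] by simp
    qed
    moreover have "(\<Sum>r\<in>K. m r * e v0 r) = 0"
      using split[of "e v0"] p(2) by (simp add: S_def)
    moreover have "\<exists>r\<in>K. m r \<noteq> 0"
      using m' by (auto simp: m_def K'_def)
    ultimately show ?thesis by (intro exI[of _ m]) auto
  qed
qed

lemma codeword_zero_if_in_span:
  assumes "in_span g k i S" and "\<forall>j\<in>S. codeword g k m j = 0"
  shows "codeword g k m i = 0"
proof -
  obtain c where c: "\<forall>r<k. g i r = (\<Sum>j\<in>S. c j * g j r)"
    using assms(1) unfolding in_span_def by blast
  have "codeword g k m i = (\<Sum>r<k. m r * (\<Sum>j\<in>S. c j * g j r))"
    unfolding codeword_def using c by (intro sum.cong) auto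
  also have "\<dots> = (\<Sum>j\<in>S. c j * codeword g k m j)"
    unfolding codeword_def by (simp add: sum_distrib_left mult_ac sum.swap[of _ "{..<k}"])
  finally show ?thesis using assms(2) by simp
qed

text \<open>Each \<open>l t\<close> is regenerated from \<open>R t - {l t}\<close>, whose members are either outside the
  indices \<open>l ` {1..x}\<close> or indices \<open>l s\<close> with \<open>s < t\<close>.\<close>
lemma codeword_zero_on_seq_indices:
  assumes v: "regen_seq g n k x R l"
    and outside: "\<forall>j\<in>{1..n} - l ` {1..x}. codeword g k m j = 0"
  shows "t \<in> {1..x} \<Longrightarrow> codeword g k m (l t) = 0"
proof (induction t rule: less_induct)
  case (less t)
  have rg: "regen g n k (l t) (R t)"
    using regen_seq_regen[OF v less.prems] .
  have "codeword g k m j = 0" if j: "j \<in> R t - {l t}" for j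
  proof (cases "j \<in> l ` {1..x}")
    case True
    then obtain s where s: "s \<in> {1..x}" "j = l s" by auto
    have "\<not> t < s"
      using regen_seq_fresh[OF v, of t s] s j less.prems by auto
    moreover have "s \<noteq> t" using s j by auto
    ultimately show ?thesis using less.IH s by auto
  qed (use j regen_subset[OF rg] outside in auto)
  then show ?case
    using rg unfolding regen_def by (blast intro: codeword_zero_if_in_span)
qed

text \<open>The \<open>x\<close> regenerated coordinates are determined by the other \<open>n - x\<close>, which therefore
  determine the whole message.\<close>
lemma regen_seq_length_bound:
  fixes g :: "nat \<Rightarrow> nat \<Rightarrow> 'a::field"
  assumes v: "regen_seq g n k x R l" and rank: "full_row_rank g n k"
  shows "x + k \<le> n"
proof (rule ccontr)
  assume "\<not> x + k \<le> n"
  define L where "L = l ` {1..x}"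
  have "inj_on l {1..x}"
    by (rule inj_onI, rule ccontr) (metis regen_seq_fresh[OF v] regen_mem[OF regen_seq_regen[OF v]]
        atLeastAtMost_iff linorder_neqE_nat)
  then have "card L = x" by (simp add: L_def card_image)
  moreover have "L \<subseteq> {1..n}"
    using v by (auto simp: L_def regen_seq_def)
  moreover from calculation have "x \<le> n"
    using card_mono[of "{1..n}" L] by simp
  ultimately have "card ({1..n} - L) < card {..<k}"
    using \<open>\<not> x + k \<le> n\<close> by (simp add: card_Diff_subset finite_subset)
  then obtain m where m: "\<exists>r\<in>{..<k}. m r \<noteq> 0" "\<forall>j\<in>{1..n} - L. codeword g k m j = 0"
    using homogeneous_system_nontrivial_solution[of "{1..n} - L" "{..<k}" g]
    by (auto simp: codeword_def)
  have "codeword g k m j = 0" if "j \<in> {1..n}" for j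
    using m(2) codeword_zero_on_seq_indices[OF v, of m] that
    by (cases "j \<in> L") (auto simp: L_def)
  then show False
    using rank m(1) unfolding full_row_rank_def by blast
qed

lemma Phi_lt_if_le_rho:
  fixes g :: "nat \<Rightarrow> nat \<Rightarrow> 'a::field"
  assumes rank: "full_row_rank g n k" and "1 \<le> k" and y: "y \<le> rho g n k"
  shows "Phi_set g n k y \<noteq> {}" and "Phi g n k y < k + y"
proof -
  define X where "X = {x. Phi_set g n k x \<noteq> {} \<and> int (Phi g n k x) - int x < int k}"
  have "X \<subseteq> {..n}"
  proof
    fix x assume "x \<in> X"
    then obtain R l where "regen_seq g n k x R l"
      using Phi_attained unfolding X_def by blast
    then show "x \<in> {..n}" using regen_seq_length_bound[OF _ rank] by fastforce
  qed
  moreover have "0 \<in> X"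
    using Phi_set_not_empty[OF regen_seq_0] \<open>1 \<le> k\<close> by (simp add: X_def Phi_def)
  ultimately have "Max X \<in> X"
    by (intro Max_in) (auto intro: finite_subset)
  then have "rho g n k \<in> X"
    by (simp add: rho_def X_def)
  then have "Phi_set g n k (rho g n k) \<noteq> {}" "Phi g n k (rho g n k) < k + rho g n k"
    unfolding X_def by auto
  then obtain R l where R: "regen_seq g n k (rho g n k) R l"
    and "card (seq_union (rho g n k) R) < k + rho g n k"
    using Phi_attained[of g n k "rho g n k"] by metis
  moreover have "card (seq_union y R) + (rho g n k - y) \<le> card (seq_union (rho g n k) R)"
    using card_seq_union_mono[OF R y] .
  moreover have v: "regen_seq g n k y R l"
    using regen_seq_prefix[OF R y] .
  ultimately show "Phi g n k y < k + y"
    using Phi_le[OF v] y by linarith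
  show "Phi_set g n k y \<noteq> {}"
    using Phi_set_not_empty[OF v] .
qed

definition repair_group ::
    "(nat \<Rightarrow> nat \<Rightarrow> 'a::field) \<Rightarrow> nat \<Rightarrow> nat \<Rightarrow> nat set \<Rightarrow> nat \<Rightarrow> nat \<Rightarrow> bool"
  where "repair_group g n k S r \<delta> \<longleftrightarrow> \<delta> \<le> card S \<and> card S \<le> r + \<delta> - 1 \<and>
    (\<forall>E. E \<subseteq> S \<and> card E = \<delta> - 1 \<longrightarrow> (\<forall>j\<in>E. regen g n k j ((S - E) \<union> {j})))"

lemma locality_iff_repair_group:
  "locality g n k T r \<delta> \<longleftrightarrow> (\<forall>\<iota>\<in>T. \<exists>S. S \<subseteq> T \<and> \<iota> \<in> S \<and> repair_group g n k S r \<delta>)"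
  unfolding locality_def repair_group_def by blast

lemma repair_group_mono: "repair_group g n k S r \<delta> \<Longrightarrow> r \<le> r' \<Longrightarrow> repair_group g n k S r' \<delta>"
  unfolding repair_group_def by auto

text \<open>What survives of two localities on their union: the groups keep locality at most \<open>r\<close>, but
  their distances \<open>d \<ge> \<delta>\<close> may differ.\<close>
definition repair_cover ::
    "(nat \<Rightarrow> nat \<Rightarrow> 'a::field) \<Rightarrow> nat \<Rightarrow> nat \<Rightarrow> nat set \<Rightarrow> nat \<Rightarrow> nat \<Rightarrow> bool"
  where "repair_cover g n k A r \<delta> \<longleftrightarrow>
    (\<forall>\<iota>\<in>A. \<exists>S d. S \<subseteq> A \<and> \<iota> \<in> S \<and> \<delta> \<le> d \<and> repair_group g n k S r d)"

lemma repair_cover_if_locality: "locality g n k T r \<delta> \<Longrightarrow> repair_cover g n k T r \<delta>"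
  unfolding locality_iff_repair_group repair_cover_def by blast

lemma repair_cover_Un:
  assumes A: "repair_cover g n k A r \<delta>" and B: "repair_cover g n k B r' \<delta>'"
    and "r \<le> r'" and "\<delta>' \<le> \<delta>"
  shows "repair_cover g n k (A \<union> B) r' \<delta>'"
  unfolding repair_cover_def
proof
  fix \<iota> assume "\<iota> \<in> A \<union> B"
  then consider "\<iota> \<in> A" | "\<iota> \<in> B" by blast
  then show "\<exists>S d. S \<subseteq> A \<union> B \<and> \<iota> \<in> S \<and> \<delta>' \<le> d \<and> repair_group g n k S r' d"
  proof cases
    case 1
    then obtain S d where S: "S \<subseteq> A" "\<iota> \<in> S" "\<delta> \<le> d" "repair_group g n k S r d"
      using A unfolding repair_cover_def by blast
    have "repair_group g n k S r' d" using repair_group_mono[OF S(4) assms(3)] .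
    moreover have "\<delta>' \<le> d" using S(3) assms(4) by linarith
    ultimately show ?thesis using S(1,2) by blast
  next
    case 2
    then obtain S d where S: "S \<subseteq> B" "\<iota> \<in> S" "\<delta>' \<le> d" "repair_group g n k S r' d"
      using B unfolding repair_cover_def by blast
    then show ?thesis by blast
  qed
qed

lemma repair_covers_if_two_localities:
  assumes "two_localities g n k T1 T2 r1 r2 \<delta>1 \<delta>2"
  shows "repair_cover g n k T1 r1 \<delta>1" and "repair_cover g n k {1..n} r2 \<delta>2"
proof -
  have "T1 \<union> T2 = {1..n}" using assms by (auto simp: two_localities_def)
  then show "repair_cover g n k T1 r1 \<delta>1" and "repair_cover g n k {1..n} r2 \<delta>2"
    using assms repair_cover_Un[of g n k T1 r1 \<delta>1 T2 r2 \<delta>2]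
    by (auto simp: two_localities_def intro: repair_cover_if_locality)
qed

lemma exists_subset_max_inter:
  assumes "finite S" and "N \<subseteq> S" and "d \<le> card S"
  shows "\<exists>E. E \<subseteq> S \<and> card E = d \<and> card (N \<inter> E) = min (card N) d"
proof -
  have fN: "finite N" using assms finite_subset by blast
  obtain N0 where N0: "N0 \<subseteq> N" "card N0 = min (card N) d"
    using obtain_subset_with_card_n[of "min (card N) d" N] by auto
  have "card N \<le> card S" using assms card_mono by blast
  then have "d - min (card N) d \<le> card (S - N)"
    using assms by (simp add: card_Diff_subset fN)
  then obtain X where X: "X \<subseteq> S - N" "card X = d - min (card N) d"
    using obtain_subset_with_card_n by metis
  have "finite X" using X assms(1) finite_subset by blast
  moreover have "N0 \<inter> X = {}" using N0 X by blast
  ultimately have "card (N0 \<union> X) = d"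
    using N0 X fN finite_subset card_Un_disjoint[of N0 X] by fastforce
  moreover have "N \<inter> (N0 \<union> X) = N0" using N0 X by blast
  ultimately show ?thesis
    using N0 X assms(2) by (intro exI[of _ "N0 \<union> X"]) auto
qed

text \<open>Take the \<open>\<delta> - 1\<close> erased positions \<open>E\<close> of the group as fresh as possible: repairing \<open>b\<close>
  fresh positions of \<open>E\<close> from \<open>S - E\<close> then costs only the fresh part of \<open>S - E\<close>.\<close>
lemma regen_seq_extend_in_group:
  assumes v: "regen_seq g n k y R l" and Sn: "S \<subseteq> {1..n}" and S: "repair_group g n k S r \<delta>"
    and b: "b \<le> card (S - seq_union y R)" "b \<le> \<delta> - 1"
  shows "\<exists>R' l'. regen_seq g n k (y + b) R' l' \<and> seq_union (y + b) R' \<subseteq> seq_union y R \<union> S \<and>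
    card (seq_union (y + b) R') \<le> card (seq_union y R) + b + (card (S - seq_union y R) - (\<delta> - 1))"
proof -
  define W where "W = seq_union y R"
  define N where "N = S - W"
  have fS: "finite S" using Sn finite_subset by blast
  have "\<delta> - 1 \<le> card S" using S unfolding repair_group_def by linarith
  then obtain E where E: "E \<subseteq> S" "card E = \<delta> - 1" "card (N \<inter> E) = min (card N) (\<delta> - 1)"
    using exists_subset_max_inter[OF fS, of N "\<delta> - 1"] by (auto simp: N_def)
  have "b \<le> card (N \<inter> E)" using E(3) b by (simp add: N_def W_def)
  then obtain C where C: "C \<subseteq> N \<inter> E" "card C = b"
    by (meson obtain_subset_with_card_n)
  have "C \<subseteq> S" using C E by (auto simp: N_def)
  then have fC: "finite C" using fS by (rule finite_subset)
  have "\<forall>j\<in>E. regen g n k j ((S - E) \<union> {j})"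
    using S E(1,2) unfolding repair_group_def by blast
  then have "\<forall>c\<in>C. regen g n k c ((S - E) \<union> {c})"
    using C by blast
  moreover have "C \<inter> seq_union y R = {}"
    using C by (auto simp: N_def W_def)
  moreover have "\<forall>c\<in>C. \<forall>c'\<in>C. c \<noteq> c' \<longrightarrow> c \<notin> (S - E) \<union> {c'}"
    using C by blast
  ultimately have "\<exists>R' l'. regen_seq g n k (y + card C) R' l' \<and>
      seq_union (y + card C) R' = seq_union y R \<union> (\<Union>c\<in>C. (S - E) \<union> {c})"
    by (rule regen_seq_append[OF v fC])
  then obtain R' l' where R': "regen_seq g n k (y + b) R' l'"
    and U': "seq_union (y + b) R' = W \<union> (\<Union>c\<in>C. (S - E) \<union> {c})"
    unfolding C(2) W_def by blast
  have sub: "seq_union (y + b) R' \<subseteq> W \<union> (N - E) \<union> C"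
    using U' C by (auto simp: N_def)
  have "card (seq_union (y + b) R') \<le> card (W \<union> (N - E) \<union> C)"
    using sub fS fC finite_seq_union[OF v] by (intro card_mono) (auto simp: N_def W_def)
  also have "\<dots> \<le> card W + card (N - E) + card C"
    using card_Un_le[of "W \<union> (N - E)" C] card_Un_le[of W "N - E"] by linarith
  also have "card (N - E) = card N - (\<delta> - 1)"
    using E(3) fS by (simp add: card_Diff_subset_Int N_def Int_commute)
  finally show ?thesis
    using R' sub C by (intro exI[of _ R'] exI[of _ l']) (auto simp: N_def W_def)
qed

text \<open>If the group through an uncovered position has at least \<open>m\<close> fresh positions, \<open>m\<close> steps cost
  the overhead \<open>r\<close> once; otherwise all its fresh positions are regenerated with no overhead.\<close>
lemma regen_seq_greedy_step:
  assumes v: "regen_seq g n k z R l" and WA: "seq_union z R \<subseteq> A" "\<not> A \<subseteq> seq_union z R"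
    and An: "A \<subseteq> {1..n}" and cover: "repair_cover g n k A r \<delta>" and m: "m \<le> \<delta> - 1"
  shows "(\<exists>R' l'. regen_seq g n k (z + m) R' l' \<and> seq_union (z + m) R' \<subseteq> A \<and>
            card (seq_union (z + m) R') \<le> card (seq_union z R) + r + m)
       \<or> (\<exists>j R' l'. 1 \<le> j \<and> j < m \<and> regen_seq g n k (z + j) R' l' \<and>
            seq_union (z + j) R' \<subseteq> A \<and> card (seq_union (z + j) R') \<le> card (seq_union z R) + j)"
proof -
  define W where "W = seq_union z R"
  obtain \<iota> where "\<iota> \<in> A" "\<iota> \<notin> W" using WA(2) by (auto simp: W_def)
  then obtain S d where S: "S \<subseteq> A" "\<iota> \<in> S" "\<delta> \<le> d" "repair_group g n k S r d"
    using cover unfolding repair_cover_def by blast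
  have Sn: "S \<subseteq> {1..n}" using S(1) An by blast
  have "finite S" using Sn finite_subset by blast
  then have fresh: "1 \<le> card (S - W)"
    using S(2) \<open>\<iota> \<notin> W\<close> by (simp add: Suc_le_eq card_gt_0_iff) blast
  have "card (S - W) \<le> card S" using \<open>finite S\<close> by (simp add: card_mono)
  then have overhead: "card (S - W) - (d - 1) \<le> r"
    using S(4) unfolding repair_group_def by linarith
  have md: "m \<le> d - 1" using m S(3) by linarith
  show ?thesis
  proof (cases "m \<le> card (S - W)")
    case True
    then obtain R' l' where "regen_seq g n k (z + m) R' l'" "seq_union (z + m) R' \<subseteq> W \<union> S"
      "card (seq_union (z + m) R') \<le> card W + m + (card (S - W) - (d - 1))"
      using regen_seq_extend_in_group[OF v Sn S(4) _ md] by (auto simp: W_def)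
    then show ?thesis
      using overhead WA(1) S(1) by (intro disjI1 exI[of _ R'] exI[of _ l']) (auto simp: W_def)
  next
    case False
    obtain R' l' where "regen_seq g n k (z + card (S - W)) R' l'"
      "seq_union (z + card (S - W)) R' \<subseteq> W \<union> S"
      "card (seq_union (z + card (S - W)) R') \<le> card W + card (S - W) + (card (S - W) - (d - 1))"
      using regen_seq_extend_in_group[OF v Sn S(4), of "card (S - W)"] False md by (auto simp: W_def)
    then show ?thesis
      using fresh False md WA(1) S(1)
      by (intro disjI2 exI[of _ "card (S - W)"] exI[of _ R'] exI[of _ l']) (auto simp: W_def)
  qed
qed

text \<open>Iterating greedy rounds, only the last one pays the overhead.\<close>
lemma regen_seq_extend_in_cover:
  assumes v: "regen_seq g n k y R l" and UA: "seq_union y R \<subseteq> A" and An: "A \<subseteq> {1..n}"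
    and cover: "repair_cover g n k A r \<delta>" and b: "b \<le> \<delta> - 1"
  shows "(\<exists>R' l'. regen_seq g n k (y + b) R' l' \<and> seq_union (y + b) R' \<subseteq> A \<and>
            card (seq_union (y + b) R') \<le> card (seq_union y R) + r + b)
       \<or> (\<exists>z R' l'. y \<le> z \<and> z < y + b \<and> regen_seq g n k z R' l' \<and>
            card A + y \<le> card (seq_union y R) + z)"
    (is "?extended \<or> ?covered")
proof -
  define U where "U = seq_union y R"
  have "?extended \<or> ?covered"
    if "regen_seq g n k z R' l'" "y \<le> z" "z \<le> y + b" "seq_union z R' \<subseteq> A"
      "card (seq_union z R') + y \<le> card U + z" for z R' l'
    using that
  proof (induction "y + b - z" arbitrary: z R' l' rule: less_induct)
    case less
    consider "z = y + b" | "z < y + b" "A \<subseteq> seq_union z R'" | "z < y + b" "\<not> A \<subseteq> seq_union z R'"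
      using less.prems(3) by linarith
    then show ?case
    proof cases
      case 1
      then have ?extended using less.prems by (auto simp: U_def)
      then show ?thesis ..
    next
      case 2
      then have "card A + y \<le> card U + z"
        using less.prems(4,5) by (simp add: subset_antisym)
      then have ?covered
        using less.prems(1,2) 2(1) by (intro exI[of _ z] exI[of _ R'] exI[of _ l']) (simp add: U_def)
      then show ?thesis ..
    next
      case 3
      have m: "y + b - z \<le> \<delta> - 1" using b less.prems(2) by linarith
      from regen_seq_greedy_step[OF less.prems(1,4) 3(2) An cover m]
      show ?thesis
      proof (elim disjE exE conjE)
        fix R'' l'' assume "regen_seq g n k (z + (y + b - z)) R'' l''"
          "seq_union (z + (y + b - z)) R'' \<subseteq> A"
          "card (seq_union (z + (y + b - z)) R'') \<le> card (seq_union z R') + r + (y + b - z)"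
        then have ?extended
          using less.prems(2,5) 3(1) unfolding U_def
          by (intro exI[of _ R''] exI[of _ l'']) (auto simp: add_diff_inverse_nat)
        then show ?thesis ..
      next
        fix j R'' l'' assume j: "1 \<le> j" "j < y + b - z" "regen_seq g n k (z + j) R'' l''"
          "seq_union (z + j) R'' \<subseteq> A" "card (seq_union (z + j) R'') \<le> card (seq_union z R') + j"
        show ?thesis
          using less.hyps[of "z + j" R'' l''] j less.prems(2,5) by auto
      qed
    qed
  qed
  then show ?thesis
    using v UA by (simp add: U_def)
qed

lemma nat_block_decomposition:
  fixes w D :: nat
  assumes "0 < D" and "0 < w"
  obtains q b where "w = q * D + b" "1 \<le> b" "b \<le> D"
proof
  show "w = (w - 1) div D * D + ((w - 1) mod D + 1)"
    using assms by simp
  show "(w - 1) mod D + 1 \<le> D"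
    using assms by (simp add: Suc_leI)
qed simp

lemma div_round_up_block:
  fixes D :: nat
  assumes "1 \<le> b" and "b \<le> D"
  shows "(q * D + b + D - 1) div D = Suc q"
  by (rule div_nat_eqI) (use assms in \<open>simp_all add: algebra_simps\<close>)

lemma div_round_up_multiple:
  fixes D :: nat
  assumes "0 < D"
  shows "(q * D + D - 1) div D = q"
  by (rule div_nat_eqI) (use assms in \<open>simp_all add: algebra_simps\<close>)

lemma ceiling_of_nat_divide:
  fixes x D :: nat
  assumes "0 < D"
  shows "\<lceil>real x / real D\<rceil> = int ((x + D - 1) div D)"
proof (rule ceiling_unique)
  define q where "q = (x + D - 1) div D"
  have "q * D \<le> x + D - 1" "x + D - 1 < D + q * D"
    using dividend_less_div_times[OF assms] by (simp_all add: q_def)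
  then have "real q * real D < real x + real D" "real x \<le> real q * real D"
    using assms by (simp_all only: of_nat_mult[symmetric] of_nat_add[symmetric] of_nat_less_iff
        of_nat_le_iff)
  then show "of_int (int q) - 1 < real x / real D" "real x / real D \<le> of_int (int q)"
    using assms by (simp_all add: field_simps)
qed

lemma regen_seq_in_cover:
  assumes An: "A \<subseteq> {1..n}" and cover: "repair_cover g n k A r (Suc D)" and D: "0 < D"
    and "r * ((x - 1) div D) + x \<le> card A"
  shows "\<exists>R l. regen_seq g n k x R l \<and> seq_union x R \<subseteq> A \<and>
    card (seq_union x R) \<le> r * ((x + D - 1) div D) + x"
  using assms(4)
proof (induction x rule: less_induct)
  case (less x)
  show ?case
  proof (cases "x = 0")
    case True
    then show ?thesis by (auto intro: regen_seq_0)
  next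
    case False
    then obtain q b where x: "x = q * D + b" "1 \<le> b" "b \<le> D"
      using nat_block_decomposition[OF D] by blast
    have q: "q \<le> (x - 1) div D"
      using div_le_mono[of "q * D" "x - 1" D] D x by simp
    have "(q * D - 1) div D \<le> (x - 1) div D"
      using x by (intro div_le_mono) simp
    then have "r * ((q * D - 1) div D) + q * D \<le> card A"
      using less.prems mult_le_mono2[of _ _ r] x by (meson add_le_mono le_add1 le_trans)
    then obtain R l where R: "regen_seq g n k (q * D) R l" "seq_union (q * D) R \<subseteq> A"
      "card (seq_union (q * D) R) \<le> r * q + q * D"
      using less.IH[of "q * D"] x div_round_up_multiple[OF D] by auto
    from regen_seq_extend_in_cover[OF R(1,2) An cover, of b] x(3)
    consider (extended) R' l' where "regen_seq g n k x R' l'" "seq_union x R' \<subseteq> A"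
        "card (seq_union x R') \<le> card (seq_union (q * D) R) + r + b"
      | (covered) z where "z < x" "card A + q * D \<le> card (seq_union (q * D) R) + z"
      unfolding x(1) by auto
    then show ?thesis
    proof cases
      case extended
      moreover have "(x + D - 1) div D = Suc q"
        using div_round_up_block[OF x(2,3)] x(1) by simp
      ultimately show ?thesis
        using R(3) x(1) by (intro exI[of _ R'] exI[of _ l']) (simp add: algebra_simps)
    next
      case covered
      then show ?thesis
        using R(3) less.prems mult_le_mono2[OF q, of r] by linarith
    qed
  qed
qed

lemma first_stage_room:
  fixes r c D N x :: nat
  assumes D: "0 < D" and x: "x \<le> c * D"
    and room: "int r * \<lceil>real_of_int (int (c * D) - 1) / real D\<rceil> + (int (c * D) - 1) < int N"
  shows "r * ((x - 1) div D) + x \<le> N"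
proof (cases "x = 0")
  case False
  define M where "M = (c * D - 1 + D - 1) div D"
  have "1 \<le> c * D" using x False by linarith
  then have "real_of_int (int (c * D) - 1) = real (c * D - 1)"
    by (simp add: of_nat_diff)
  then have "\<lceil>real_of_int (int (c * D) - 1) / real D\<rceil> = int M"
    using ceiling_of_nat_divide[OF D, of "c * D - 1"] by (simp add: M_def)
  then have "int (r * M + c * D) < int N + 1"
    using room by simp
  moreover have "r * ((x - 1) div D) \<le> r * M"
    using x D unfolding M_def by (intro mult_le_mono2 div_le_mono) linarith
  ultimately show ?thesis
    using x by linarith
qed simp

corollary Phi_le_in_cover:
  assumes "A \<subseteq> {1..n}" and "repair_cover g n k A r (Suc D)" and "0 < D"
    and "r * ((x - 1) div D) + x \<le> card A"
  shows "Phi_set g n k x \<noteq> {}" and "int (Phi g n k x) \<le> int r * \<lceil>real x / real D\<rceil> + int x"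
proof -
  obtain R l where v: "regen_seq g n k x R l"
    and "card (seq_union x R) \<le> r * ((x + D - 1) div D) + x"
    using regen_seq_in_cover[OF assms] by blast
  then have "Phi_set g n k x \<noteq> {}" and "Phi g n k x \<le> r * ((x + D - 1) div D) + x"
    using Phi_set_not_empty[OF v] Phi_le[OF v] by simp_all
  moreover from this(2) have "int (Phi g n k x) \<le> int (r * ((x + D - 1) div D) + x)"
    by (simp only: of_nat_le_iff)
  ultimately show "Phi_set g n k x \<noteq> {}" and "int (Phi g n k x) \<le> int r * \<lceil>real x / real D\<rceil> + int x"
    using ceiling_of_nat_divide[OF assms(3), of x] by simp_all
qed

text \<open>Below \<open>\<rho> + 1\<close> the greedy cannot cover \<open>[n]\<close>: starting from a sequence realising \<open>\<Phi> y\<close>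
  with \<open>y \<le> \<rho>\<close>, that would give \<open>n \<le> \<Phi> y + (z - y) < k + z\<close>, against \<open>z + k \<le> n\<close>.\<close>
lemma Phi_le_beyond:
  fixes g :: "nat \<Rightarrow> nat \<Rightarrow> 'a::field"
  assumes rank: "full_row_rank g n k" and k: "1 \<le> k"
    and cover: "repair_cover g n k {1..n} r (Suc D)" and D: "0 < D"
    and start: "Phi_set g n k y \<noteq> {}" and x: "y \<le> x" "x \<le> rho g n k + 1"
  shows "Phi_set g n k x \<noteq> {}"
    and "int (Phi g n k x) \<le> int (Phi g n k y) + int r * \<lceil>real (x - y) / real D\<rceil> + int (x - y)"
proof -
  have "y \<le> x \<Longrightarrow> x \<le> rho g n k + 1 \<Longrightarrow>
    Phi_set g n k x \<noteq> {} \<and> Phi g n k x \<le> Phi g n k y + r * ((x - y + D - 1) div D) + (x - y)"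
  proof (induction x rule: less_induct)
    case (less x)
    show ?case
    proof (cases "x = y")
      case True
      then show ?thesis
        using start div_round_up_multiple[OF D, of 0] by simp
    next
      case False
      then obtain q b where x: "x - y = q * D + b" "1 \<le> b" "b \<le> D"
        using nat_block_decomposition[OF D, of "x - y"] less.prems(1) by auto
      define y' where "y' = y + q * D"
      have "y' < x" "y' \<le> rho g n k" using x less.prems by (auto simp: y'_def)
      then have IH: "Phi_set g n k y' \<noteq> {}" "Phi g n k y' \<le> Phi g n k y + r * q + q * D"
        using less.IH[of y'] less.prems div_round_up_multiple[OF D, of q] by (auto simp: y'_def)
      obtain R l where R: "regen_seq g n k y' R l" "card (seq_union y' R) = Phi g n k y'"
        using Phi_attained[OF IH(1)] by blast
      have Phi_y': "Phi g n k y' < k + y'"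
        using Phi_lt_if_le_rho[OF rank k \<open>y' \<le> rho g n k\<close>] by blast
      have xb: "x = y' + b" using x less.prems(1) by (simp add: y'_def)
      from regen_seq_extend_in_cover[OF R(1) seq_union_subset[OF R(1)] order_refl cover, of b] x(3)
      consider (extended) R' l' where "regen_seq g n k x R' l'"
          "card (seq_union x R') \<le> Phi g n k y' + r + b"
        | (covered) z R' l' where "z < x" "regen_seq g n k z R' l'" "n + y' \<le> Phi g n k y' + z"
        unfolding xb R(2) by auto
      then show ?thesis
      proof cases
        case extended
        moreover have "(x - y + D - 1) div D = Suc q"
          using div_round_up_block[OF x(2,3)] x(1) by simp
        ultimately show ?thesis
          using IH(2) Phi_le[OF extended(1)] Phi_set_not_empty[OF extended(1)] xb
          by (simp add: y'_def algebra_simps)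
      next
        case covered
        then show ?thesis
          using regen_seq_length_bound[OF covered(2) rank] Phi_y' by linarith
      qed
    qed
  qed
  then have "Phi_set g n k x \<noteq> {}"
    and "Phi g n k x \<le> Phi g n k y + r * ((x - y + D - 1) div D) + (x - y)"
    using x by blast+
  moreover from this(2)
  have "int (Phi g n k x) \<le> int (Phi g n k y + r * ((x - y + D - 1) div D) + (x - y))"
    by (simp only: of_nat_le_iff)
  ultimately show "Phi_set g n k x \<noteq> {}"
    and "int (Phi g n k x) \<le> int (Phi g n k y) + int r * \<lceil>real (x - y) / real D\<rceil> + int (x - y)"
    using ceiling_of_nat_divide[OF D, of "x - y"] by simp_all
qed

theorem lemma1:
  fixes g :: "nat \<Rightarrow> nat \<Rightarrow> 'a::{field,finite}"
    and n k d r1 r2 \<delta>1 \<delta>2 n1 n2 :: nat and T1 T2 :: "nat set" and \<Delta> :: int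
  assumes code: "is_code g n k d"
    and loc: "two_localities g n k T1 T2 r1 r2 \<delta>1 \<delta>2"
    and n1: "n1 = card T1" and n2: "n2 = card T2"
    and Delta: "\<Delta> = \<lceil>real n1 / real (r1 + \<delta>1 - 1)\<rceil> * int (\<delta>1 - 1)"
    and h1: "int r1 * \<lceil>real n1 / real (r1 + \<delta>1 - 1)\<rceil> \<le> int k - 1"
    and h2: "int r1 * \<lceil>real_of_int (\<Delta> - 1) / real (\<delta>1 - 1)\<rceil> + (\<Delta> - 1) < int n1"
  shows "(\<forall>x::nat. int x \<le> \<Delta> \<longrightarrow>
            (x = 0 \<or> Phi_set g n k x \<noteq> {}) \<and>
            int (Phi g n k x) \<le> int r1 * \<lceil>real x / real (\<delta>1 - 1)\<rceil> + int x)
       \<and> (\<forall>x::nat. \<Delta> \<le> int x \<and> x \<le> rho g n k + 1 \<longrightarrow>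
            (x = 0 \<or> Phi_set g n k x \<noteq> {}) \<and>
            int (Phi g n k x) \<le> int r1 * \<lceil>real n1 / real (r1 + \<delta>1 - 1)\<rceil>
               + int r2 * \<lceil>real_of_int (int x - \<Delta>) / real (\<delta>2 - 1)\<rceil> + int x)"
proof -
  have rank: "full_row_rank g n k" using code by (simp add: is_code_def)
  define D1 where "D1 = \<delta>1 - 1"
  define D2 where "D2 = \<delta>2 - 1"
  have T1: "T1 \<subseteq> {1..n}" and D: "\<delta>1 = Suc D1" "\<delta>2 = Suc D2" "0 < D1" "0 < D2"
    using loc by (auto simp: two_localities_def D1_def D2_def)
  have cover1: "repair_cover g n k T1 r1 (Suc D1)" and cover: "repair_cover g n k {1..n} r2 (Suc D2)"
    using repair_covers_if_two_localities[OF loc] unfolding D(1,2) .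
  have "0 \<le> \<lceil>real n1 / real (r1 + \<delta>1 - 1)\<rceil>"
    by (simp add: less_le_trans[of "-1" 0])
  then obtain c :: nat where c: "\<lceil>real n1 / real (r1 + \<delta>1 - 1)\<rceil> = int c"
    using nonneg_int_cases by blast
  have \<Delta>: "\<Delta> = int (c * D1)" using Delta c by (simp add: D1_def)
  have "0 \<le> int r1 * int c" by simp
  then have "1 \<le> k" using h1 unfolding c by linarith
  have stage1: "Phi_set g n k x \<noteq> {}" "int (Phi g n k x) \<le> int r1 * \<lceil>real x / real D1\<rceil> + int x"
    if "x \<le> c * D1" for x
    using Phi_le_in_cover[OF T1 cover1 D(3)] first_stage_room[OF D(3) that, of r1 n1]
      h2[unfolded \<Delta> D1_def[symmetric]] n1 by simp_all
  show ?thesis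
  proof (rule conjI; intro allI impI)
    fix x :: nat assume "int x \<le> \<Delta>"
    then have "x \<le> c * D1" by (simp only: \<Delta> of_nat_le_iff)
    then show "(x = 0 \<or> Phi_set g n k x \<noteq> {}) \<and>
      int (Phi g n k x) \<le> int r1 * \<lceil>real x / real (\<delta>1 - 1)\<rceil> + int x"
      using stage1 unfolding D1_def by blast
  next
    fix x :: nat assume x: "\<Delta> \<le> int x \<and> x \<le> rho g n k + 1"
    then have "c * D1 \<le> x" by (simp only: \<Delta> of_nat_le_iff)
    have "int (Phi g n k (c * D1)) \<le> int r1 * int c + int (c * D1)"
      using stage1(2)[of "c * D1"] D(3) by simp
    moreover have "Phi_set g n k x \<noteq> {}" "int (Phi g n k x) \<le> int (Phi g n k (c * D1))
        + int r2 * \<lceil>real (x - c * D1) / real D2\<rceil> + int (x - c * D1)"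
      using Phi_le_beyond[OF rank \<open>1 \<le> k\<close> cover D(4) stage1(1)[of "c * D1"]] x \<open>c * D1 \<le> x\<close>
      by auto
    moreover have "real (x - c * D1) = real_of_int (int x - \<Delta>)"
      using \<open>c * D1 \<le> x\<close> by (simp add: \<Delta> of_nat_diff)
    ultimately show "(x = 0 \<or> Phi_set g n k x \<noteq> {}) \<and>
      int (Phi g n k x) \<le> int r1 * \<lceil>real n1 / real (r1 + \<delta>1 - 1)\<rceil>
        + int r2 * \<lceil>real_of_int (int x - \<Delta>) / real (\<delta>2 - 1)\<rceil> + int x"
      using \<open>c * D1 \<le> x\<close> unfolding c D2_def[symmetric] by (simp add: of_nat_diff)
  qed
qed

end
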